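(* Let $G$ be a wheel-like brick and let $u_h$ be a hub of $G$. Then every multiple edge of $G$ is incident with $u_h$.
   Context: Graphs are finite and loopless; multiple edges allowed (an edge is a multiple edge if some other edge has the same two ends). A graph is matching covered if it is connected, has at least two vertices, and every edge lies in a perfect matching. A cut (edges with exactly one end in a vertex set $X$) is tight if every perfect matching contains exactly one of its edges, trivial if one side has one vertex. A brick is a nonbipartite matching covered graph all of whose tight cuts are trivial. An edge $e$ is removable if $G-e$ is matching covered; a pair $\{e,f\}$ is a removable doubleton if $G-e-f$ is matching covered but neither $G-e$ nor $G-f$ is; these are the removable classes. A brick $G$ is wheel-like if it has a vertex $h$, called a hub, such that every removable class contains an edge incident with $h$. *)

theory Defs
  imports Main
begin

text \<open>A finite loopless multigraph: vertex set V, edge set E (edges are abstract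
  objects, so parallel edges are allowed), and an end map assigning each edge
  its set of two distinct ends.\<close>

definition multigraph :: "'v set \<Rightarrow> 'e set \<Rightarrow> ('e \<Rightarrow> 'v set) \<Rightarrow> bool" where
  "multigraph V E ends \<longleftrightarrow> finite V \<and> finite E \<and>
     (\<forall>e\<in>E. card (ends e) = 2 \<and> ends e \<subseteq> V)"

definition adjacent :: "'e set \<Rightarrow> ('e \<Rightarrow> 'v set) \<Rightarrow> 'v \<Rightarrow> 'v \<Rightarrow> bool" where
  "adjacent E ends u v \<longleftrightarrow> (\<exists>e\<in>E. ends e = {u, v})"

definition connected_graph :: "'v set \<Rightarrow> 'e set \<Rightarrow> ('e \<Rightarrow> 'v set) \<Rightarrow> bool" where
  "connected_graph V E ends \<longleftrightarrow> (\<forall>u\<in>V. \<forall>v\<in>V. (adjacent E ends)\<^sup>*\<^sup>* u v)"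

definition perfect_matching :: "'v set \<Rightarrow> 'e set \<Rightarrow> ('e \<Rightarrow> 'v set) \<Rightarrow> 'e set \<Rightarrow> bool" where
  "perfect_matching V E ends M \<longleftrightarrow> M \<subseteq> E \<and> (\<forall>v\<in>V. \<exists>!e. e \<in> M \<and> v \<in> ends e)"

definition matching_covered :: "'v set \<Rightarrow> 'e set \<Rightarrow> ('e \<Rightarrow> 'v set) \<Rightarrow> bool" where
  "matching_covered V E ends \<longleftrightarrow> multigraph V E ends \<and> connected_graph V E ends \<and>
     card V \<ge> 2 \<and> (\<forall>e\<in>E. \<exists>M. perfect_matching V E ends M \<and> e \<in> M)"

definition cut :: "'e set \<Rightarrow> ('e \<Rightarrow> 'v set) \<Rightarrow> 'v set \<Rightarrow> 'e set" where
  "cut E ends X = {e\<in>E. card (ends e \<inter> X) = 1}"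

definition tight_cut :: "'v set \<Rightarrow> 'e set \<Rightarrow> ('e \<Rightarrow> 'v set) \<Rightarrow> 'v set \<Rightarrow> bool" where
  "tight_cut V E ends X \<longleftrightarrow> X \<subseteq> V \<and>
     (\<forall>M. perfect_matching V E ends M \<longrightarrow> card (M \<inter> cut E ends X) = 1)"

definition trivial_cut :: "'v set \<Rightarrow> 'v set \<Rightarrow> bool" where
  "trivial_cut V X \<longleftrightarrow> card X = 1 \<or> card (V - X) = 1"

definition bipartite :: "'v set \<Rightarrow> 'e set \<Rightarrow> ('e \<Rightarrow> 'v set) \<Rightarrow> bool" where
  "bipartite V E ends \<longleftrightarrow> (\<exists>A\<subseteq>V. \<forall>e\<in>E. card (ends e \<inter> A) = 1)"

definition brick :: "'v set \<Rightarrow> 'e set \<Rightarrow> ('e \<Rightarrow> 'v set) \<Rightarrow> bool" where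
  "brick V E ends \<longleftrightarrow> matching_covered V E ends \<and> \<not> bipartite V E ends \<and>
     (\<forall>X. tight_cut V E ends X \<longrightarrow> trivial_cut V X)"

definition removable_edge :: "'v set \<Rightarrow> 'e set \<Rightarrow> ('e \<Rightarrow> 'v set) \<Rightarrow> 'e \<Rightarrow> bool" where
  "removable_edge V E ends e \<longleftrightarrow> e \<in> E \<and> matching_covered V (E - {e}) ends"

definition removable_doubleton :: "'v set \<Rightarrow> 'e set \<Rightarrow> ('e \<Rightarrow> 'v set) \<Rightarrow> 'e \<Rightarrow> 'e \<Rightarrow> bool" where
  "removable_doubleton V E ends e f \<longleftrightarrow> e \<in> E \<and> f \<in> E \<and> e \<noteq> f \<and>
     matching_covered V (E - {e, f}) ends \<and>
     \<not> matching_covered V (E - {e}) ends \<and> \<not> matching_covered V (E - {f}) ends"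

definition removable_class :: "'v set \<Rightarrow> 'e set \<Rightarrow> ('e \<Rightarrow> 'v set) \<Rightarrow> 'e set \<Rightarrow> bool" where
  "removable_class V E ends C \<longleftrightarrow>
     (\<exists>e. C = {e} \<and> removable_edge V E ends e) \<or>
     (\<exists>e f. C = {e, f} \<and> removable_doubleton V E ends e f)"

definition is_hub :: "'v set \<Rightarrow> 'e set \<Rightarrow> ('e \<Rightarrow> 'v set) \<Rightarrow> 'v \<Rightarrow> bool" where
  "is_hub V E ends h \<longleftrightarrow> h \<in> V \<and>
     (\<forall>C. removable_class V E ends C \<longrightarrow> (\<exists>e\<in>C. h \<in> ends e))"

definition wheel_like :: "'v set \<Rightarrow> 'e set \<Rightarrow> ('e \<Rightarrow> 'v set) \<Rightarrow> bool" where
  "wheel_like V E ends \<longleftrightarrow> brick V E ends \<and> (\<exists>h. is_hub V E ends h)"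

definition multiple_edge :: "'e set \<Rightarrow> ('e \<Rightarrow> 'v set) \<Rightarrow> 'e \<Rightarrow> bool" where
  "multiple_edge E ends e \<longleftrightarrow> e \<in> E \<and> (\<exists>f\<in>E. f \<noteq> e \<and> ends f = ends e)"

end

theory Submission
  imports Defs
begin

text \<open>A multiple edge e can be deleted without harm: a parallel edge f takes over
  its role in every perfect matching and in every path. Hence e is removable, so
  {e} is a removable class, and a hub must be one of its ends.\<close>

lemma multigraph_Diff:
  assumes "multigraph V E ends"
  shows "multigraph V (E - F) ends"
  using assms unfolding multigraph_def by auto

lemma perfect_matching_Diff:
  assumes "perfect_matching V E ends M" and "M \<inter> F = {}"
  shows "perfect_matching V (E - F) ends M"
  using assms unfolding perfect_matching_def by blast

lemma perfect_matching_swap_parallel: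
  assumes G: "multigraph V E ends" and M: "perfect_matching V E ends M"
    and "e \<in> M" and "f \<in> E" and "f \<noteq> e" and parallel: "ends f = ends e"
  shows "perfect_matching V (E - {e}) ends (insert f (M - {e}))"
proof -
  have "e \<in> E" using M \<open>e \<in> M\<close> unfolding perfect_matching_def by blast
  then have "card (ends e) = 2" "ends e \<subseteq> V"
    using G unfolding multigraph_def by auto
  then obtain w where w: "w \<in> ends e" "w \<in> V"
    by (metis card.empty ex_in_conv subsetD zero_neq_numeral)
  have "f \<notin> M"
    using M \<open>e \<in> M\<close> \<open>f \<noteq> e\<close> parallel w unfolding perfect_matching_def by metis
  show ?thesis unfolding perfect_matching_def
  proof (intro conjI ballI)
    show "insert f (M - {e}) \<subseteq> E - {e}"
      using M \<open>f \<in> E\<close> \<open>f \<noteq> e\<close> unfolding perfect_matching_def by blast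
  next
    fix v assume "v \<in> V"
    then obtain g where g: "g \<in> M" "v \<in> ends g"
      and unique: "\<And>h. h \<in> M \<Longrightarrow> v \<in> ends h \<Longrightarrow> h = g"
      using M unfolding perfect_matching_def by metis
    show "\<exists>!h. h \<in> insert f (M - {e}) \<and> v \<in> ends h"
    proof (cases "g = e")
      case True
      show ?thesis
      proof (rule ex1I[of _ f])
        show "f \<in> insert f (M - {e}) \<and> v \<in> ends f" using g True parallel by simp
        show "h = f" if "h \<in> insert f (M - {e}) \<and> v \<in> ends h" for h
          using that unique True by blast
      qed
    next
      case False
      then have "v \<notin> ends e" using unique \<open>e \<in> M\<close> by blast
      show ?thesis
      proof (rule ex1I[of _ g])
        show "g \<in> insert f (M - {e}) \<and> v \<in> ends g" using g False by simp
        show "h = g" if "h \<in> insert f (M - {e}) \<and> v \<in> ends h" for h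
          using that unique parallel \<open>v \<notin> ends e\<close> by blast
      qed
    qed
  qed
qed

lemma adjacent_Diff_parallel:
  assumes "f \<in> E" and "f \<noteq> e" and "ends f = ends e"
  shows "adjacent (E - {e}) ends = adjacent E ends"
  using assms unfolding adjacent_def by (auto intro!: ext)

lemma removable_edge_if_multiple_edge:
  assumes G: "matching_covered V E ends" and "multiple_edge E ends e"
  shows "removable_edge V E ends e"
proof -
  obtain f where "e \<in> E" "f \<in> E" "f \<noteq> e" and parallel: "ends f = ends e"
    using \<open>multiple_edge E ends e\<close> unfolding multiple_edge_def by blast
  have mg: "multigraph V E ends" using G unfolding matching_covered_def by blast
  have "\<exists>M. perfect_matching V (E - {e}) ends M \<and> g \<in> M" if "g \<in> E - {e}" for g
  proof -
    obtain M where M: "perfect_matching V E ends M" "g \<in> M"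
      using G \<open>g \<in> E - {e}\<close> unfolding matching_covered_def by blast
    show ?thesis
    proof (cases "e \<in> M")
      case True
      then show ?thesis
        using perfect_matching_swap_parallel[OF mg M(1) True \<open>f \<in> E\<close> \<open>f \<noteq> e\<close> parallel]
          M(2) that by blast
    next
      case False
      then show ?thesis using perfect_matching_Diff[OF M(1)] M(2) by blast
    qed
  qed
  moreover have "connected_graph V (E - {e}) ends"
    using G adjacent_Diff_parallel[OF \<open>f \<in> E\<close> \<open>f \<noteq> e\<close> parallel]
    unfolding matching_covered_def connected_graph_def by simp
  ultimately show ?thesis
    using G \<open>e \<in> E\<close> multigraph_Diff[OF mg]
    unfolding removable_edge_def matching_covered_def by blast
qed

theorem mainTheorem8:
  fixes V :: "'v set" and E :: "'e set" and ends :: "'e \<Rightarrow> 'v set" and uh :: 'v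
  assumes "wheel_like V E ends"
    and "is_hub V E ends uh"
  shows "\<forall>e. multiple_edge E ends e \<longrightarrow> uh \<in> ends e"
proof (intro allI impI)
  fix e assume "multiple_edge E ends e"
  have "matching_covered V E ends"
    using assms(1) unfolding wheel_like_def brick_def by blast
  then have "removable_edge V E ends e"
    using \<open>multiple_edge E ends e\<close> by (rule removable_edge_if_multiple_edge)
  then have "removable_class V E ends {e}"
    unfolding removable_class_def by blast
  then show "uh \<in> ends e" using assms(2) unfolding is_hub_def by blast
qed

end
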